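(* For all positive integers $A,B$, with $n=A+B$, $$\mathrm{exa}_1(n,K_{A,B})=\binom{n}{2}-A-B+\mathrm{mup}(A,B).$$
   Context: $K_{A,B}$ is the complete bipartite graph with parts of sizes $A$ and $B$. For graphs $H,F$, $\mathcal N(H,F)$ is the number of subgraphs of $H$ isomorphic to $F$, and $\mathrm{exa}_1(n,F)$ is the largest number of edges of a simple graph $H$ on $n$ vertices with $\mathcal N(H,F)=1$. A unique partition of $A$ and $B$ consists of positive integers $A_1,\dots,A_a$ with $\sum_i A_i=A$ and $B_1,\dots,B_b$ with $\sum_j B_j=B$ such that, viewing these as $a+b$ indexed items, the only subsets of the items whose sum equals $A$ are the set of items $\{A_1,\dots,A_a\}$ and, in case $A=B$, also its complement $\{B_1,\dots,B_b\}$ (so e.g. $A_i\ne B_j$ is forced when $A\ne B$, while equal values among the $A_i$ are allowed). $\mathrm{mup}(A,B)$ is the maximum of $a+b$ over all unique partitions of $A$ and $B$, with the convention $\mathrm{mup}(1,1)=2$. *)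

theory Defs
  imports Main
begin

definition simple_graph :: "nat \<Rightarrow> nat set set \<Rightarrow> bool" where
  "simple_graph n E \<longleftrightarrow>
     E \<subseteq> {e. \<exists>x y. e = {x, y} \<and> x \<noteq> y \<and> x < n \<and> y < n}"

definition bip_edges :: "nat set \<Rightarrow> nat set \<Rightarrow> nat set set" where
  "bip_edges X Y = {{x, y} | x y. x \<in> X \<and> y \<in> Y}"

text \<open>Subgraphs of the graph (on {0..<n} with edges E) isomorphic to K_{A,B}.
  Since K_{A,B} (A,B >= 1) has no isolated vertices, such a subgraph is determined
  by its edge set.\<close>

definition KAB_copies :: "nat \<Rightarrow> nat set set \<Rightarrow> nat \<Rightarrow> nat \<Rightarrow> nat set set set" where
  "KAB_copies n E A B =
     {F. F \<subseteq> E \<and> (\<exists>X Y. X \<subseteq> {0..<n} \<and> Y \<subseteq> {0..<n} \<and> X \<inter> Y = {} \<and>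
                         card X = A \<and> card Y = B \<and> F = bip_edges X Y)}"

definition N_KAB :: "nat \<Rightarrow> nat set set \<Rightarrow> nat \<Rightarrow> nat \<Rightarrow> nat" where
  "N_KAB n E A B = card (KAB_copies n E A B)"

definition exa1_KAB :: "nat \<Rightarrow> nat \<Rightarrow> nat \<Rightarrow> nat" where
  "exa1_KAB n A B = Max {card E | E. simple_graph n E \<and> N_KAB n E A B = 1}"

definition unique_partition :: "nat \<Rightarrow> nat \<Rightarrow> nat list \<Rightarrow> nat list \<Rightarrow> bool" where
  "unique_partition A B xs ys \<longleftrightarrow>
     (\<forall>x\<in>set xs. x > 0) \<and> (\<forall>y\<in>set ys. y > 0) \<and>
     sum_list xs = A \<and> sum_list ys = B \<and>
     (\<forall>S \<subseteq> {0..<length xs + length ys}.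
        (\<Sum>i\<in>S. (xs @ ys) ! i) = A \<longrightarrow>
          S = {0..<length xs} \<or>
          (A = B \<and> S = {length xs..<length xs + length ys}))"

definition mup :: "nat \<Rightarrow> nat \<Rightarrow> nat" where
  "mup A B = (if A = 1 \<and> B = 1 then 2
              else Max {length xs + length ys | xs ys. unique_partition A B xs ys})"

end

theory Submission
  imports Defs "HOL-Library.Disjoint_Sets"
begin

(* Let C be the complement of a graph E on V = {0..<n}. Since A + B = n, a copy of K_{A,B} in E
   spans V, so it is the cut between some A-set X and V - X, and this cut avoids C exactly when X
   is a union of connected components of C. Listing the sizes of the components inside and outside
   one such X as (A_i) and (B_j), E contains exactly one copy iff these lists form a unique
   partition of A and B. A graph with k components has at least n - k edges, hence
   |E| <= C(n,2) - n + k <= C(n,2) - n + mup(A,B); conversely, taking for C disjoint stars on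
   blocks whose sizes form an optimal unique partition attains the bound. *)

section \<open>Graphs and cuts\<close>

definition edges_on :: "'a set \<Rightarrow> 'a set set" where
  "edges_on V = {e. e \<subseteq> V \<and> card e = 2}"

definition crossing_free :: "'a set set \<Rightarrow> 'a set \<Rightarrow> bool" where
  "crossing_free C X \<longleftrightarrow> (\<forall>e\<in>C. e \<subseteq> X \<or> e \<inter> X = {})"

lemma simple_graph_iff_subset_edges_on: "simple_graph n E \<longleftrightarrow> E \<subseteq> edges_on {0..<n}"
proof -
  have "{e. \<exists>x y. e = {x, y} \<and> x \<noteq> y \<and> x < n \<and> y < n} = edges_on {0..<n}"
    unfolding edges_on_def by (force simp: card_2_iff)
  then show ?thesis unfolding simple_graph_def by simp
qed

lemma finite_edges_on: "finite V \<Longrightarrow> finite (edges_on V)"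
  unfolding edges_on_def by (rule finite_subset[of _ "Pow V"]) auto

lemma card_edges_on: "finite V \<Longrightarrow> card (edges_on V) = card V choose 2"
  unfolding edges_on_def by (rule n_subsets)

lemma card_edges_on_Diff:
  assumes "finite V" "C \<subseteq> edges_on V"
  shows "card (edges_on V - C) + card C = card V choose 2"
  using card_Diff_subset[OF finite_subset[OF assms(2) finite_edges_on[OF assms(1)]] assms(2)]
    card_mono[OF finite_edges_on[OF assms(1)] assms(2)] card_edges_on[OF assms(1)] by simp

lemma bip_edges_commute: "bip_edges X Y = bip_edges Y X"
  unfolding bip_edges_def by (auto simp: insert_commute)

lemma bip_edges_cut:
  assumes "X \<subseteq> V"
  shows "bip_edges X (V - X) = {e \<in> edges_on V. \<not> e \<subseteq> X \<and> e \<inter> X \<noteq> {}}"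
proof (intro set_eqI iffI)
  fix e assume "e \<in> bip_edges X (V - X)"
  then obtain x y where "e = {x, y}" "x \<in> X" "y \<in> V - X" unfolding bip_edges_def by blast
  then show "e \<in> {e \<in> edges_on V. \<not> e \<subseteq> X \<and> e \<inter> X \<noteq> {}}"
    using assms unfolding edges_on_def by (auto simp: card_2_iff)
next
  fix e assume "e \<in> {e \<in> edges_on V. \<not> e \<subseteq> X \<and> e \<inter> X \<noteq> {}}"
  then obtain a b where e: "e = {a, b}" "e \<subseteq> V" "\<not> e \<subseteq> X" "e \<inter> X \<noteq> {}"
    unfolding edges_on_def by (auto simp: card_2_iff)
  then consider "a \<in> X" "b \<in> V - X" | "b \<in> X" "a \<in> V - X" by auto
  then show "e \<in> bip_edges X (V - X)"
    unfolding bip_edges_def e(1) by cases (auto simp: insert_commute)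
qed

lemma doubleton_mem_bip_edges_cut:
  assumes "X \<subseteq> V" "u \<in> V" "v \<in> V"
  shows "{u, v} \<in> bip_edges X (V - X) \<longleftrightarrow> (u \<in> X \<longleftrightarrow> v \<notin> X)"
  using assms unfolding bip_edges_def by (auto simp: doubleton_eq_iff)

lemma bip_edges_cut_eq_iff:
  assumes "X \<subseteq> V" "Y \<subseteq> V" "X \<noteq> {}"
  shows "bip_edges X (V - X) = bip_edges Y (V - Y) \<longleftrightarrow> Y = X \<or> Y = V - X"
proof
  assume eq: "bip_edges X (V - X) = bip_edges Y (V - Y)"
  have crosses: "(u \<in> X \<longleftrightarrow> v \<notin> X) \<longleftrightarrow> (u \<in> Y \<longleftrightarrow> v \<notin> Y)" if "u \<in> V" "v \<in> V" for u v
    using eq doubleton_mem_bip_edges_cut[OF assms(1) that] doubleton_mem_bip_edges_cut[OF assms(2) that]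
    by simp
  obtain x where x: "x \<in> X" using assms(3) by blast
  show "Y = X \<or> Y = V - X"
  proof (cases "x \<in> Y")
    case True
    then have "Y = X" using crosses[of x] x assms(1,2) by blast
    then show ?thesis ..
  next
    case False
    then have "Y = V - X" using crosses[of x] x assms(1,2) by blast
    then show ?thesis ..
  qed
next
  assume "Y = X \<or> Y = V - X"
  then show "bip_edges X (V - X) = bip_edges Y (V - Y)"
    using assms(1) bip_edges_commute[of "V - X"] by (auto simp: double_diff)
qed

lemma bip_edges_cut_disjoint_iff:
  assumes "X \<subseteq> V" "C \<subseteq> edges_on V"
  shows "bip_edges X (V - X) \<inter> C = {} \<longleftrightarrow> crossing_free C X"
  using assms unfolding bip_edges_cut[OF assms(1)] crossing_free_def by blast

section \<open>Partitions into blocks\<close>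

lemma finite_block:
  assumes "partition_on V P" "finite V" "p \<in> P"
  shows "finite p"
proof (rule finite_subset[OF _ assms(2)])
  show "p \<subseteq> V" using assms(3) partition_onD1[OF assms(1)] by blast
qed

lemma card_Union_blocks:
  assumes "partition_on V P" "finite V" "S \<subseteq> P"
  shows "card (\<Union>S) = (\<Sum>p\<in>S. card p)"
proof (rule card_Union_disjoint)
  show "pairwise disjnt S" using pairwise_subset[OF partition_onD2[OF assms(1)] assms(3)] .
  show "finite p" if "p \<in> S" for p
    using finite_block[OF assms(1,2)] that assms(3) by blast
qed

lemma sum_list_map_card_blocks:
  assumes "partition_on V P" "finite V" "distinct L" "set L \<subseteq> P"
  shows "sum_list (map card L) = card (\<Union>(set L))"
  using card_Union_blocks[OF assms(1,2,4)] sum_list_distinct_conv_sum_set[OF assms(3)] by simp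

lemma blocks_within_Union:
  assumes "partition_on V P" "S \<subseteq> P"
  shows "{p \<in> P. p \<subseteq> \<Union>S} = S"
proof -
  have "p \<in> S" if p: "p \<in> P" and sub: "p \<subseteq> \<Union>S" for p
  proof -
    have "p \<noteq> {}" using p partition_onD3[OF assms(1)] by blast
    then obtain x where x: "x \<in> p" by blast
    then obtain s where s: "s \<in> S" "x \<in> s" using sub by blast
    then have "p = s" using x assms(2) disjointD[OF partition_onD2[OF assms(1)] p] by blast
    then show ?thesis using s by simp
  qed
  then show ?thesis using assms(2) by blast
qed

lemma Union_set_append_right:
  assumes "partition_on V (set (LX @ LY))" "distinct (LX @ LY)"
  shows "\<Union>(set LY) = V - \<Union>(set LX)"
proof -
  have "set LY = set (LX @ LY) - set LX" using assms(2) by auto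
  then show ?thesis
    using diff_Union_pairwise_disjoint[OF partition_onD2[OF assms(1)], of "set LX"]
      partition_onD1[OF assms(1)] by simp
qed

lemma partition_on_merge:
  assumes "partition_on V P" "p \<in> P" "q \<in> P"
  shows "partition_on V (insert (p \<union> q) (P - {p, q}))"
proof (rule partition_onI)
  have dis: "disjnt r s" if "r \<in> P" "s \<in> P" "r \<noteq> s" for r s
    using that partition_onD2[OF assms(1)] by (simp add: pairwise_def)
  have "\<Union>(insert (p \<union> q) (P - {p, q})) = \<Union>P" using assms(2,3) by blast
  then show "\<Union>(insert (p \<union> q) (P - {p, q})) = V" using partition_onD1[OF assms(1)] by simp
  show "disjnt r s"
    if r: "r \<in> insert (p \<union> q) (P - {p, q})" and s: "s \<in> insert (p \<union> q) (P - {p, q})"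
      and "r \<noteq> s" for r s
  proof -
    have merged: "disjnt (p \<union> q) t" if "t \<in> P - {p, q}" for t
      using that dis[OF assms(2), of t] dis[OF assms(3), of t] by (auto simp: disjnt_Un1)
    consider "r = p \<union> q" "s \<in> P - {p, q}" | "s = p \<union> q" "r \<in> P - {p, q}"
      | "r \<in> P - {p, q}" "s \<in> P - {p, q}"
      using r s \<open>r \<noteq> s\<close> by blast
    then show ?thesis
      by cases (use merged dis \<open>r \<noteq> s\<close> in \<open>auto simp: disjnt_sym\<close>)
  qed
  show "{} \<notin> insert (p \<union> q) (P - {p, q})" using assms partition_onD3[OF assms(1)] by auto
qed

lemma card_merge_blocks:
  assumes "partition_on V P" "finite V" "p \<in> P" "q \<in> P"
  shows "card P \<le> Suc (card (insert (p \<union> q) (P - {p, q})))"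
proof (cases "p = q")
  case True
  then show ?thesis using assms(3) by (simp add: insert_absorb)
next
  case False
  have fin: "finite P" using finite_elements[OF assms(2,1)] .
  have "p \<union> q \<notin> P"
  proof
    assume "p \<union> q \<in> P"
    moreover have "p \<noteq> {}" using assms(1,3) partition_onD3 by blast
    ultimately have "p \<union> q = p" using assms(3) partition_onD2[OF assms(1)] by (auto dest: disjointD)
    moreover have "q \<noteq> {}" using assms(1,4) partition_onD3 by blast
    ultimately show False using False assms(3,4) partition_onD2[OF assms(1)] by (auto dest: disjointD)
  qed
  then show ?thesis using fin False assms(3,4) by (simp add: card_Diff_subset)
qed

lemma exists_blocks_of_sizes:
  assumes "\<forall>z\<in>set zs. 0 < z"
  shows "\<exists>L. distinct L \<and> map card L = zs \<and> partition_on {0..<sum_list zs} (set L)"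
  using assms
proof (induction zs rule: rev_induct)
  case Nil
  show ?case by (intro exI[of _ "[]"]) (simp add: partition_on_empty)
next
  case (snoc z zs)
  then obtain L where L: "distinct L" "map card L = zs" "partition_on {0..<sum_list zs} (set L)"
    by auto
  let ?m = "sum_list zs"
  have "0 < z" using snoc.prems by simp
  have "partition_on {0..<?m + z} (insert {?m..<?m + z} (set L))"
  proof (subst partition_on_insert)
    show "disjnt {?m..<?m + z} (\<Union>(set L))"
      using partition_onD1[OF L(3), symmetric] by (auto simp: disjnt_def)
    show "partition_on ({0..<?m + z} - {?m..<?m + z}) (set L) \<and> {?m..<?m + z} \<subseteq> {0..<?m + z}
        \<and> {?m..<?m + z} \<noteq> {}"
    proof -
      have "{0..<?m + z} - {?m..<?m + z} = {0..<?m}" by auto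
      then show ?thesis using L(3) \<open>0 < z\<close> by simp
    qed
  qed
  moreover have "{?m..<?m + z} \<notin> set L"
  proof
    assume "{?m..<?m + z} \<in> set L"
    then have "?m \<in> \<Union>(set L)" using \<open>0 < z\<close> by (intro UnionI[of "{?m..<?m + z}"]) auto
    then show False using partition_onD1[OF L(3)] by auto
  qed
  ultimately show ?case using L by (intro exI[of _ "L @ [{?m..<?m + z}]"]) simp
qed

section \<open>Connected components\<close>

(* P is the partition of V into the connected components of the graph with edge set C. *)
definition component_partition :: "'a set set \<Rightarrow> 'a set \<Rightarrow> 'a set set \<Rightarrow> bool" where
  "component_partition C V P \<longleftrightarrow> partition_on V P \<and> (\<forall>e\<in>C. \<exists>p\<in>P. e \<subseteq> p) \<and>
     (\<forall>X. crossing_free C X \<longrightarrow> (\<forall>p\<in>P. p \<subseteq> X \<or> p \<inter> X = {}))"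

lemma component_partitionD:
  assumes "component_partition C V P"
  shows "partition_on V P"
    and "e \<in> C \<Longrightarrow> \<exists>p\<in>P. e \<subseteq> p"
    and "crossing_free C X \<Longrightarrow> p \<in> P \<Longrightarrow> p \<subseteq> X \<or> p \<inter> X = {}"
  using assms unfolding component_partition_def by blast+

lemma crossing_free_Union_blocks:
  assumes "component_partition C V P" "S \<subseteq> P"
  shows "crossing_free C (\<Union>S)"
  unfolding crossing_free_def
proof
  fix e assume "e \<in> C"
  then obtain p where p: "p \<in> P" "e \<subseteq> p" using component_partitionD(2)[OF assms(1)] by blast
  have "disjoint P" using partition_onD2[OF component_partitionD(1)[OF assms(1)]] .
  then have "p \<inter> \<Union>S = {}" if "p \<notin> S" using disjointD[OF _ p(1)] that assms(2) by blast
  then show "e \<subseteq> \<Union>S \<or> e \<inter> \<Union>S = {}" using p(2) by blast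
qed

lemma Union_blocks_within:
  assumes "component_partition C V P" "crossing_free C X" "X \<subseteq> V"
  shows "\<Union>{p \<in> P. p \<subseteq> X} = X"
proof
  show "X \<subseteq> \<Union>{p \<in> P. p \<subseteq> X}"
  proof
    fix x assume x: "x \<in> X"
    then obtain p where p: "p \<in> P" "x \<in> p"
      using assms(3) partition_onD1[OF component_partitionD(1)[OF assms(1)]] by blast
    then have "p \<subseteq> X" using component_partitionD(3)[OF assms(1,2) p(1)] x by blast
    then show "x \<in> \<Union>{p \<in> P. p \<subseteq> X}" using p by blast
  qed
qed blast

lemma bij_betw_Union_crossing_free:
  assumes "component_partition C V P"
  shows "bij_betw Union (Pow P) {X. X \<subseteq> V \<and> crossing_free C X}"
proof (rule bij_betw_imageI)
  note part = component_partitionD(1)[OF assms]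
  show "inj_on Union (Pow P)"
  proof (rule inj_onI)
    fix S T assume S: "S \<in> Pow P" and T: "T \<in> Pow P" and eq: "\<Union>S = \<Union>T"
    have "S = {p \<in> P. p \<subseteq> \<Union>S}" using blocks_within_Union[OF part PowD[OF S]] by (rule sym)
    also have "\<dots> = T" unfolding eq by (rule blocks_within_Union[OF part PowD[OF T]])
    finally show "S = T" .
  qed
  show "Union ` Pow P = {X. X \<subseteq> V \<and> crossing_free C X}"
  proof (intro set_eqI iffI)
    fix X assume "X \<in> Union ` Pow P"
    then obtain S where S: "S \<subseteq> P" "X = \<Union>S" by blast
    then have "X \<subseteq> \<Union>P" by blast
    then show "X \<in> {X. X \<subseteq> V \<and> crossing_free C X}"
      using crossing_free_Union_blocks[OF assms S(1)] S(2) partition_onD1[OF part] by simp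
  next
    fix X assume "X \<in> {X. X \<subseteq> V \<and> crossing_free C X}"
    then have "X = \<Union>{p \<in> P. p \<subseteq> X}" using Union_blocks_within[OF assms] by simp
    then show "X \<in> Union ` Pow P" by (rule image_eqI) simp
  qed
qed

lemma component_partition_insert_edge:
  assumes P: "component_partition C V P" and pq: "p \<in> P" "q \<in> P" and xy: "x \<in> p" "y \<in> q"
  shows "component_partition (insert {x, y} C) V (insert (p \<union> q) (P - {p, q}))"
  unfolding component_partition_def
proof (intro conjI allI impI ballI)
  show "partition_on V (insert (p \<union> q) (P - {p, q}))"
    by (rule partition_on_merge[OF component_partitionD(1)[OF P] pq])
  show "\<exists>r\<in>insert (p \<union> q) (P - {p, q}). e \<subseteq> r" if e: "e \<in> insert {x, y} C" for e
  proof (cases "e = {x, y}")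
    case True
    then show ?thesis using xy by (intro bexI[of _ "p \<union> q"]) auto
  next
    case False
    then have "e \<in> C" using e by simp
    then obtain r where r: "r \<in> P" "e \<subseteq> r" using component_partitionD(2)[OF P] by blast
    show ?thesis
    proof (cases "r = p \<or> r = q")
      case True
      then show ?thesis using r(2) by (intro bexI[of _ "p \<union> q"]) auto
    next
      case False
      then show ?thesis using r by (intro bexI[of _ r]) auto
    qed
  qed
  show "r \<subseteq> X \<or> r \<inter> X = {}"
    if cf: "crossing_free (insert {x, y} C) X" and r: "r \<in> insert (p \<union> q) (P - {p, q})" for X r
  proof -
    have "crossing_free C X" using cf unfolding crossing_free_def by simp
    note blocks = component_partitionD(3)[OF P this]
    show ?thesis
    proof (cases "r = p \<union> q")
      case True
      have "{x, y} \<subseteq> X \<or> {x, y} \<inter> X = {}" using cf unfolding crossing_free_def by simp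
      then show ?thesis using True blocks[OF pq(1)] blocks[OF pq(2)] xy by auto
    next
      case False
      then show ?thesis using r blocks by blast
    qed
  qed
qed

(* Adding an edge merges at most two components. *)
lemma exists_component_partition:
  assumes "finite C" "finite V" "C \<subseteq> edges_on V"
  shows "\<exists>P. component_partition C V P \<and> card V \<le> card P + card C"
  using assms(1,3)
proof (induction C rule: finite_induct)
  case empty
  have "component_partition {} V ((\<lambda>v. {v}) ` V)"
    unfolding component_partition_def by (auto intro: partition_on_singletons)
  moreover have "card ((\<lambda>v. {v}) ` V) = card V" by (rule card_image) (simp add: inj_on_def)
  ultimately show ?case by (metis add_0_right card.empty order_refl)
next
  case (insert e C)
  obtain P where P: "component_partition C V P" and card: "card V \<le> card P + card C"
    using insert by auto
  obtain x y where e: "e = {x, y}" "x \<in> V" "y \<in> V"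
    using insert.prems unfolding edges_on_def by (auto simp: card_2_iff)
  note part = component_partitionD(1)[OF P]
  then obtain p q where pq: "p \<in> P" "q \<in> P" "x \<in> p" "y \<in> q"
    using e partition_onD1[OF part] by blast
  let ?P = "insert (p \<union> q) (P - {p, q})"
  have "component_partition (insert e C) V ?P"
    unfolding e(1) by (rule component_partition_insert_edge[OF P pq])
  moreover have "card P \<le> Suc (card ?P)" by (rule card_merge_blocks[OF part assms(2) pq(1,2)])
  ultimately show ?case using card insert.hyps by (intro exI[of _ ?P]) simp
qed

definition star :: "'a::linorder set \<Rightarrow> 'a set set" where
  "star p = (\<lambda>v. {Min p, v}) ` (p - {Min p})"

lemma star_subset_edges_on:
  assumes "finite p"
  shows "star p \<subseteq> edges_on p"
proof
  fix e assume "e \<in> star p"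
  then obtain v where v: "v \<in> p" "v \<noteq> Min p" "e = {Min p, v}" unfolding star_def by blast
  then have "Min p \<in> p" using Min_in[OF assms] by blast
  then show "e \<in> edges_on p" using v unfolding edges_on_def by (auto simp: card_2_iff)
qed

lemma card_star:
  assumes "finite p" "p \<noteq> {}"
  shows "card (star p) = card p - 1"
proof -
  have "inj_on (\<lambda>v. {Min p, v}) (p - {Min p})" by (auto simp: inj_on_def doubleton_eq_iff)
  then show ?thesis using assms unfolding star_def by (simp add: card_image)
qed

lemma crossing_free_star:
  assumes "finite p" "crossing_free (star p) X"
  shows "p \<subseteq> X \<or> p \<inter> X = {}"
proof -
  have "v \<in> X \<longleftrightarrow> Min p \<in> X" if "v \<in> p" for v
  proof (cases "v = Min p")
    case False
    then have "{Min p, v} \<in> star p" using that unfolding star_def by (intro imageI) simp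
    with assms(2)[unfolded crossing_free_def] have "{Min p, v} \<subseteq> X \<or> {Min p, v} \<inter> X = {}"
      by (rule bspec)
    then show ?thesis by auto
  qed simp
  then show ?thesis by (cases "Min p \<in> X") auto
qed

lemma component_partition_stars:
  assumes "partition_on V P" "finite V"
  shows "component_partition (\<Union>(star ` P)) V P"
  unfolding component_partition_def
proof (intro conjI ballI allI impI)
  note fin = finite_block[OF assms]
  show "partition_on V P" by (rule assms(1))
  show "\<exists>p\<in>P. e \<subseteq> p" if "e \<in> \<Union>(star ` P)" for e
    using that star_subset_edges_on[OF fin] unfolding edges_on_def by blast
  show "p \<subseteq> X \<or> p \<inter> X = {}" if "crossing_free (\<Union>(star ` P)) X" "p \<in> P" for X p
    using crossing_free_star[OF fin[OF that(2)]] that unfolding crossing_free_def by blast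
qed

lemma stars_subset_edges_on:
  assumes "partition_on V P" "finite V"
  shows "\<Union>(star ` P) \<subseteq> edges_on V"
proof -
  have "edges_on p \<subseteq> edges_on V" if "p \<in> P" for p
    using that partition_onD1[OF assms(1)] unfolding edges_on_def by blast
  then show ?thesis using star_subset_edges_on[OF finite_block[OF assms]] by blast
qed

lemma card_stars:
  assumes "partition_on V P" "finite V"
  shows "card (\<Union>(star ` P)) + card P = card V"
proof -
  have finP: "finite P" by (rule finite_elements[OF assms(2,1)])
  note fin = finite_block[OF assms]
  have ne: "p \<noteq> {}" if "p \<in> P" for p using that partition_onD3[OF assms(1)] by blast
  have "card (\<Union>(star ` P)) = (\<Sum>p\<in>P. card (star p))"
  proof (rule card_UN_disjoint[OF finP])
    show "\<forall>p\<in>P. finite (star p)" using fin unfolding star_def by blast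
    show "\<forall>p\<in>P. \<forall>q\<in>P. p \<noteq> q \<longrightarrow> star p \<inter> star q = {}"
    proof (intro ballI impI)
      fix p q assume "p \<in> P" "q \<in> P" "p \<noteq> q"
      then have "p \<inter> q = {}" using disjointD[OF partition_onD2[OF assms(1)]] by blast
      then have "edges_on p \<inter> edges_on q = {}" unfolding edges_on_def by (auto simp: card_2_iff)
      then show "star p \<inter> star q = {}"
        using star_subset_edges_on[OF fin[OF \<open>p \<in> P\<close>]] star_subset_edges_on[OF fin[OF \<open>q \<in> P\<close>]] by blast
    qed
  qed
  also have "\<dots> = (\<Sum>p\<in>P. card p - 1)" using card_star fin ne by (intro sum.cong) auto
  also have "\<dots> + card P = (\<Sum>p\<in>P. card p - 1 + 1)" by (simp only: sum.distrib card_eq_sum)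
  also have "\<dots> = (\<Sum>p\<in>P. card p)"
  proof (rule sum.cong[OF refl])
    fix p assume "p \<in> P"
    then have "0 < card p" using fin ne card_gt_0_iff by blast
    then show "card p - 1 + 1 = card p" by simp
  qed
  also have "\<dots> = card V"
    using card_Union_blocks[OF assms order_refl] partition_onD1[OF assms(1)] by simp
  finally show ?thesis .
qed

section \<open>Copies of the complete bipartite graph\<close>

(* Since A + B = n, every copy of K_{A,B} spans all vertices. *)
lemma KAB_copies_eq_cuts:
  assumes C: "C \<subseteq> edges_on {0..<n}" and n: "n = A + B"
  shows "KAB_copies n (edges_on {0..<n} - C) A B =
    (\<lambda>X. bip_edges X ({0..<n} - X)) ` {X. X \<subseteq> {0..<n} \<and> crossing_free C X \<and> card X = A}"
proof (intro set_eqI iffI)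
  fix F assume "F \<in> KAB_copies n (edges_on {0..<n} - C) A B"
  then obtain X Y where F: "F \<subseteq> edges_on {0..<n} - C" "F = bip_edges X Y"
    and XY: "X \<subseteq> {0..<n}" "Y \<subseteq> {0..<n}" "X \<inter> Y = {}" "card X = A" "card Y = B"
    unfolding KAB_copies_def by blast
  have "finite X" "finite Y" using XY(1,2) finite_subset by blast+
  then have "card (X \<union> Y) = card {0..<n}" using XY n by (simp add: card_Un_disjoint)
  then have "X \<union> Y = {0..<n}" using XY(1,2) by (intro card_subset_eq) auto
  then have Y: "Y = {0..<n} - X" using XY(3) by blast
  have "crossing_free C X"
    using F bip_edges_cut_disjoint_iff[OF XY(1) C] unfolding Y by blast
  then show "F \<in> (\<lambda>X. bip_edges X ({0..<n} - X)) ` {X. X \<subseteq> {0..<n} \<and> crossing_free C X \<and> card X = A}"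
    using F(2) XY(1,4) unfolding Y by blast
next
  fix F assume "F \<in> (\<lambda>X. bip_edges X ({0..<n} - X)) ` {X. X \<subseteq> {0..<n} \<and> crossing_free C X \<and> card X = A}"
  then obtain X where X: "X \<subseteq> {0..<n}" "crossing_free C X" "card X = A"
    and F: "F = bip_edges X ({0..<n} - X)" by blast
  have "card ({0..<n} - X) = B" using X(1,3) n by (simp add: card_Diff_subset finite_subset)
  moreover have "F \<subseteq> edges_on {0..<n} - C"
    using bip_edges_cut[OF X(1)] bip_edges_cut_disjoint_iff[OF X(1) C] X(2) unfolding F by blast
  ultimately show "F \<in> KAB_copies n (edges_on {0..<n} - C) A B"
    unfolding KAB_copies_def using X F by blast
qed

lemma card_image_eq_1_iff:
  assumes "x \<in> S"
  shows "card (f ` S) = 1 \<longleftrightarrow> (\<forall>y\<in>S. f y = f x)"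
proof
  assume "card (f ` S) = 1"
  then obtain z where "f ` S = {z}" by (auto simp: card_1_singleton_iff)
  then show "\<forall>y\<in>S. f y = f x" using assms by (metis imageI singletonD)
next
  assume "\<forall>y\<in>S. f y = f x"
  then have "f ` S = {f x}" using assms by blast
  then show "card (f ` S) = 1" by simp
qed

lemma N_KAB_eq_1_iff:
  assumes C: "C \<subseteq> edges_on {0..<n}" and n: "n = A + B" and "0 < A"
    and X0: "X0 \<subseteq> {0..<n}" "crossing_free C X0" "card X0 = A"
  shows "N_KAB n (edges_on {0..<n} - C) A B = 1 \<longleftrightarrow>
    (\<forall>X. X \<subseteq> {0..<n} \<and> crossing_free C X \<and> card X = A \<longrightarrow> X = X0 \<or> (A = B \<and> X = {0..<n} - X0))"
proof -
  let ?\<X> = "{X. X \<subseteq> {0..<n} \<and> crossing_free C X \<and> card X = A}"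
  have "X0 \<noteq> {}" using X0(3) \<open>0 < A\<close> by auto
  have "card ({0..<n} - X0) = B" using X0(1,3) n by (simp add: card_Diff_subset finite_subset)
  then have same_cut: "bip_edges X ({0..<n} - X) = bip_edges X0 ({0..<n} - X0) \<longleftrightarrow>
      X = X0 \<or> (A = B \<and> X = {0..<n} - X0)" if "X \<in> ?\<X>" for X
    using that bip_edges_cut_eq_iff[OF X0(1), of X] \<open>X0 \<noteq> {}\<close> by auto
  have "N_KAB n (edges_on {0..<n} - C) A B = card ((\<lambda>X. bip_edges X ({0..<n} - X)) ` ?\<X>)"
    unfolding N_KAB_def KAB_copies_eq_cuts[OF C n] ..
  also have "\<dots> = 1 \<longleftrightarrow> (\<forall>X\<in>?\<X>. bip_edges X ({0..<n} - X) = bip_edges X0 ({0..<n} - X0))"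
    using X0 by (intro card_image_eq_1_iff) simp
  finally show ?thesis using same_cut by blast
qed

section \<open>Unique partitions from the components\<close>

lemma nth_append_image_left: "(!) (xs @ ys) ` {0..<length xs} = set xs"
  using nth_image[of "length xs" "xs @ ys"] by simp

lemma nth_append_image_right: "(!) (xs @ ys) ` {length xs..<length xs + length ys} = set ys"
proof
  show "(!) (xs @ ys) ` {length xs..<length xs + length ys} \<subseteq> set ys"
    by (auto simp: nth_append)
  show "set ys \<subseteq> (!) (xs @ ys) ` {length xs..<length xs + length ys}"
  proof
    fix y assume "y \<in> set ys"
    then obtain j where "j < length ys" "y = ys ! j" by (auto simp: in_set_conv_nth)
    then show "y \<in> (!) (xs @ ys) ` {length xs..<length xs + length ys}"
      by (intro image_eqI[of _ _ "length xs + j"]) auto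
  qed
qed

lemma bij_betw_index_sets_crossing_free:
  assumes "component_partition C V (set L)" "distinct L"
  shows "bij_betw (\<lambda>I. \<Union>((!) L ` I)) (Pow {0..<length L}) {X. X \<subseteq> V \<and> crossing_free C X}"
proof -
  have "bij_betw ((`) ((!) L)) (Pow {0..<length L}) (Pow (set L))"
    by (intro bij_betw_image_Pow bij_betw_nth[OF assms(2)]) auto
  from bij_betw_trans[OF this bij_betw_Union_crossing_free[OF assms(1)]]
  show ?thesis by (simp add: comp_def)
qed

lemma card_Union_nth_blocks:
  assumes "partition_on V (set L)" "finite V" "distinct L" "I \<subseteq> {0..<length L}"
  shows "card (\<Union>((!) L ` I)) = (\<Sum>i\<in>I. card (L ! i))"
proof -
  have "card (\<Union>((!) L ` I)) = (\<Sum>p\<in>(!) L ` I. card p)"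
    using assms(4) by (intro card_Union_blocks[OF assms(1,2)]) auto
  also have "\<dots> = (\<Sum>i\<in>I. card (L ! i))"
    using inj_on_subset[OF inj_on_nth[OF assms(3)] assms(4)] by (simp add: sum.reindex)
  finally show ?thesis .
qed

lemma unique_index_sets_iff_unique_crossing_free:
  assumes P: "component_partition C V (set (LX @ LY))" and dist: "distinct (LX @ LY)" and "finite V"
  shows "(\<forall>S\<subseteq>{0..<length LX + length LY}. (\<Sum>i\<in>S. (map card LX @ map card LY) ! i) = A \<longrightarrow>
      S = {0..<length LX} \<or> (A = B \<and> S = {length LX..<length LX + length LY})) \<longleftrightarrow>
    (\<forall>X. X \<subseteq> V \<and> crossing_free C X \<and> card X = A \<longrightarrow>
      X = \<Union>(set LX) \<or> (A = B \<and> X = V - \<Union>(set LX)))"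
proof -
  define U where "U = (\<lambda>I. \<Union>((!) (LX @ LY) ` I))"
  let ?a = "length LX" and ?k = "length LX + length LY" and ?zs = "map card LX @ map card LY"
  have part: "partition_on V (set (LX @ LY))" using component_partitionD(1)[OF P] .
  have bij: "bij_betw U (Pow {0..<?k}) {X. X \<subseteq> V \<and> crossing_free C X}"
    using bij_betw_index_sets_crossing_free[OF P dist] unfolding U_def by simp
  have card_U: "card (U I) = (\<Sum>i\<in>I. ?zs ! i)" if "I \<subseteq> {0..<?k}" for I
  proof -
    have "card (U I) = (\<Sum>i\<in>I. card ((LX @ LY) ! i))"
      unfolding U_def using card_Union_nth_blocks[OF part \<open>finite V\<close> dist] that by simp
    also have "\<dots> = (\<Sum>i\<in>I. ?zs ! i)" using that by (intro sum.cong) (auto simp flip: map_append)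
    finally show ?thesis .
  qed
  have U_left: "U {0..<?a} = \<Union>(set LX)"
    unfolding U_def nth_append_image_left ..
  have U_right: "U {?a..<?k} = V - \<Union>(set LX)"
    unfolding U_def nth_append_image_right by (rule Union_set_append_right[OF part dist])
  have U_eq_iff: "U S = U T \<longleftrightarrow> S = T" if "S \<subseteq> {0..<?k}" "T \<subseteq> {0..<?k}" for S T
    using inj_on_eq_iff[OF bij_betw_imp_inj_on[OF bij]] that by simp
  have "{0..<?a} \<subseteq> {0..<?k}" "{?a..<?k} \<subseteq> {0..<?k}" by auto
  then have pointwise: "((\<Sum>i\<in>S. ?zs ! i) = A \<longrightarrow> S = {0..<?a} \<or> (A = B \<and> S = {?a..<?k})) \<longleftrightarrow>
      (card (U S) = A \<longrightarrow> U S = U {0..<?a} \<or> (A = B \<and> U S = U {?a..<?k}))"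
    if "S \<subseteq> {0..<?k}" for S
    using card_U[OF that] U_eq_iff[OF that] by simp
  have "(\<forall>S\<subseteq>{0..<?k}. (\<Sum>i\<in>S. ?zs ! i) = A \<longrightarrow> S = {0..<?a} \<or> (A = B \<and> S = {?a..<?k}))
    \<longleftrightarrow> (\<forall>S\<in>Pow {0..<?k}. card (U S) = A \<longrightarrow> U S = U {0..<?a} \<or> (A = B \<and> U S = U {?a..<?k}))"
    using pointwise by auto
  also have "\<dots> \<longleftrightarrow> (\<forall>X\<in>{X. X \<subseteq> V \<and> crossing_free C X}.
      card X = A \<longrightarrow> X = \<Union>(set LX) \<or> (A = B \<and> X = V - \<Union>(set LX)))"
    unfolding bij_betw_imp_surj_on[OF bij, symmetric] U_left U_right by simp
  finally show ?thesis by (simp add: imp_conjL)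
qed

lemma unique_partition_iff_unique_crossing_free:
  assumes P: "component_partition C V (set (LX @ LY))" and dist: "distinct (LX @ LY)" and "finite V"
  shows "unique_partition A B (map card LX) (map card LY) \<longleftrightarrow>
    card (\<Union>(set LX)) = A \<and> card (V - \<Union>(set LX)) = B \<and>
    (\<forall>X. X \<subseteq> V \<and> crossing_free C X \<and> card X = A \<longrightarrow>
       X = \<Union>(set LX) \<or> (A = B \<and> X = V - \<Union>(set LX)))"
proof -
  have part: "partition_on V (set (LX @ LY))" using component_partitionD(1)[OF P] .
  have "0 < card p" if "p \<in> set (LX @ LY)" for p
    using that finite_block[OF part \<open>finite V\<close>] partition_onD3[OF part] by (auto simp: card_gt_0_iff)
  then have positive: "\<forall>x\<in>set (map card LX). 0 < x" "\<forall>y\<in>set (map card LY). 0 < y" by auto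
  have sums: "sum_list (map card LX) = card (\<Union>(set LX))" "sum_list (map card LY) = card (V - \<Union>(set LX))"
    using sum_list_map_card_blocks[OF part \<open>finite V\<close>] dist Union_set_append_right[OF part dist] by auto
  show ?thesis
    using positive sums unique_index_sets_iff_unique_crossing_free[OF assms]
    unfolding unique_partition_def by simp
qed

lemma graph_of_unique_partition:
  assumes "0 < A" and n: "n = A + B" and up: "unique_partition A B xs ys"
  shows "\<exists>E. simple_graph n E \<and> N_KAB n E A B = 1 \<and> card E + n = (n choose 2) + (length xs + length ys)"
proof -
  let ?V = "{0..<n}"
  have "\<forall>z\<in>set (xs @ ys). 0 < z" "sum_list (xs @ ys) = n"
    using up n unfolding unique_partition_def by auto
  then obtain L where L: "distinct L" "map card L = xs @ ys" "partition_on ?V (set L)"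
    using exists_blocks_of_sizes by metis
  define LX where "LX = take (length xs) L"
  define LY where "LY = drop (length xs) L"
  have L_split: "L = LX @ LY" "map card LX = xs" "map card LY = ys"
    using L(2) unfolding LX_def LY_def by (simp_all add: take_map[symmetric] drop_map[symmetric])
  define C where "C = \<Union>(star ` set L)"
  have P: "component_partition C ?V (set (LX @ LY))"
    using component_partition_stars[OF L(3)] L_split(1) unfolding C_def by simp
  have C_edges: "C \<subseteq> edges_on ?V"
    unfolding C_def by (rule stars_subset_edges_on[OF L(3) finite_atLeastLessThan])
  have "unique_partition A B (map card LX) (map card LY)" using up L_split by simp
  then have uniq: "card (\<Union>(set LX)) = A \<and> card (?V - \<Union>(set LX)) = B \<and>
    (\<forall>X. X \<subseteq> ?V \<and> crossing_free C X \<and> card X = A \<longrightarrow>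
       X = \<Union>(set LX) \<or> (A = B \<and> X = ?V - \<Union>(set LX)))"
    unfolding unique_partition_iff_unique_crossing_free[OF P L(1)[unfolded L_split(1)] finite_atLeastLessThan] .
  have "\<Union>(set LX) \<subseteq> \<Union>(set L)" using L_split(1) by (intro Union_mono) simp
  then have X0: "\<Union>(set LX) \<subseteq> ?V" "crossing_free C (\<Union>(set LX))"
    using partition_onD1[OF L(3)] crossing_free_Union_blocks[OF P, of "set LX"] by simp_all
  define E where "E = edges_on ?V - C"
  have "N_KAB n E A B = 1"
    unfolding E_def N_KAB_eq_1_iff[OF C_edges n \<open>0 < A\<close> X0 uniq[THEN conjunct1]]
    using uniq by blast
  moreover have "simple_graph n E" unfolding E_def simple_graph_iff_subset_edges_on by blast
  moreover have "card E + n = (n choose 2) + (length xs + length ys)"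
  proof -
    have "card C + length L = n" using card_stars[OF L(3)] distinct_card[OF L(1)] unfolding C_def by simp
    moreover have "length L = length xs + length ys" using L(2) by (metis length_append length_map)
    ultimately show ?thesis
      using card_edges_on_Diff[OF finite_atLeastLessThan C_edges] unfolding E_def by simp
  qed
  ultimately show ?thesis by blast
qed

lemma unique_partition_of_graph:
  assumes "0 < A" and n: "n = A + B" and E: "simple_graph n E" "N_KAB n E A B = 1"
  shows "\<exists>xs ys. unique_partition A B xs ys \<and> card E + n \<le> (n choose 2) + (length xs + length ys)"
proof -
  let ?V = "{0..<n}"
  define C where "C = edges_on ?V - E"
  have C_edges: "C \<subseteq> edges_on ?V" unfolding C_def by blast
  have E_eq: "E = edges_on ?V - C"
    using E(1) unfolding C_def simple_graph_iff_subset_edges_on by (simp add: double_diff)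
  have "KAB_copies n E A B \<noteq> {}" using E(2) unfolding N_KAB_def by (metis card.empty zero_neq_one)
  then have "{X. X \<subseteq> ?V \<and> crossing_free C X \<and> card X = A} \<noteq> {}"
    unfolding E_eq KAB_copies_eq_cuts[OF C_edges n] by (simp only: image_is_empty not_False_eq_True)
  then obtain X0 where X0: "X0 \<subseteq> ?V" "crossing_free C X0" "card X0 = A" by blast
  have uniq: "\<forall>X. X \<subseteq> ?V \<and> crossing_free C X \<and> card X = A \<longrightarrow> X = X0 \<or> (A = B \<and> X = ?V - X0)"
    using E(2) unfolding E_eq N_KAB_eq_1_iff[OF C_edges n \<open>0 < A\<close> X0] .
  have finC: "finite C" using finite_subset[OF C_edges finite_edges_on] by simp
  obtain P where P: "component_partition C ?V P" and card_P: "n \<le> card P + card C"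
    using exists_component_partition[OF finC _ C_edges] by auto
  have "finite P" using finite_elements[OF _ component_partitionD(1)[OF P]] by simp
  then have "finite {p \<in> P. p \<subseteq> X0}" by simp
  then obtain LX where LX: "distinct LX" "set LX = {p \<in> P. p \<subseteq> X0}"
    using finite_distinct_list[of "{p \<in> P. p \<subseteq> X0}"] by blast
  obtain LY where LY: "distinct LY" "set LY = P - set LX"
    using finite_distinct_list[of "P - set LX"] \<open>finite P\<close> by blast
  have dist: "distinct (LX @ LY)" and set_L: "set (LX @ LY) = P" using LX LY by auto
  have X0_blocks: "\<Union>(set LX) = X0" using Union_blocks_within[OF P X0(2,1)] LX(2) by simp
  have card_rest: "card (?V - X0) = B" using X0(1,3) n by (simp add: card_Diff_subset finite_subset)
  have "unique_partition A B (map card LX) (map card LY)"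
    unfolding unique_partition_iff_unique_crossing_free[OF P[folded set_L] dist finite_atLeastLessThan]
      X0_blocks by (intro conjI X0(3) card_rest uniq)
  moreover have "card E + n \<le> (n choose 2) + (length (map card LX) + length (map card LY))"
  proof -
    have "card P = length LX + length LY" using distinct_card[OF dist] set_L by simp
    then show ?thesis
      using card_P card_edges_on_Diff[OF finite_atLeastLessThan C_edges] unfolding E_eq by simp
  qed
  ultimately show ?thesis by blast
qed

section \<open>The extremal number\<close>

lemma length_le_sum_list: "\<forall>x\<in>set xs. 0 < x \<Longrightarrow> length xs \<le> sum_list (xs :: nat list)"
  by (induction xs) auto

lemma unique_partition_length_le: "unique_partition A B xs ys \<Longrightarrow> length xs + length ys \<le> A + B"
  unfolding unique_partition_def using length_le_sum_list[of xs] length_le_sum_list[of ys] by auto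

lemma unique_partition_singletons:
  assumes "0 < A" "0 < B"
  shows "unique_partition A B [A] [B]"
  unfolding unique_partition_def
proof (intro conjI allI impI)
  fix S assume "S \<subseteq> {0..<length [A] + length [B]}" and sum: "(\<Sum>i\<in>S. ([A] @ [B]) ! i) = A"
  then have "S \<in> Pow {0, 1}" by auto
  also have "Pow {0::nat, 1} = {{}, {0}, {1}, {0, 1}}" by (auto simp: Pow_insert)
  finally show "S = {0..<length [A]} \<or> A = B \<and> S = {length [A]..<length [A] + length [B]}"
    using sum assms by auto
qed (use assms in simp_all)

lemma mup_eq_Max:
  assumes "0 < A" "0 < B"
  shows "mup A B = Max {length xs + length ys | xs ys. unique_partition A B xs ys}"
proof (cases "A = 1 \<and> B = 1")
  case True
  have "Max {length xs + length ys | xs ys. unique_partition 1 1 xs ys} = 2"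
  proof (rule Max_eqI)
    show "finite {length xs + length ys | xs ys. unique_partition 1 1 xs ys}"
      by (rule finite_subset[of _ "{..2}"]) (auto dest: unique_partition_length_le)
    show "y \<le> 2" if "y \<in> {length xs + length ys | xs ys. unique_partition 1 1 xs ys}" for y
      using that unique_partition_length_le by fastforce
    show "2 \<in> {length xs + length ys | xs ys. unique_partition 1 1 xs ys}"
      using unique_partition_singletons[of 1 1] by force
  qed
  then show ?thesis using True unfolding mup_def by simp
next
  case False
  then show ?thesis unfolding mup_def by (rule if_not_P)
qed

lemma finite_unique_partition_lengths:
  "finite {length xs + length ys | xs ys. unique_partition A B xs ys}"
  by (rule finite_subset[of _ "{..A + B}"]) (auto dest: unique_partition_length_le)

lemma unique_partition_length_le_mup:
  assumes "0 < A" "0 < B" "unique_partition A B xs ys"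
  shows "length xs + length ys \<le> mup A B"
  unfolding mup_eq_Max[OF assms(1,2)] using assms(3)
  by (intro Max_ge[OF finite_unique_partition_lengths]) blast

lemma mup_attained:
  assumes "0 < A" "0 < B"
  obtains xs ys where "unique_partition A B xs ys" "length xs + length ys = mup A B"
proof -
  have "mup A B \<in> {length xs + length ys | xs ys. unique_partition A B xs ys}"
    unfolding mup_eq_Max[OF assms] using unique_partition_singletons[OF assms]
    by (intro Max_in[OF finite_unique_partition_lengths]) blast
  then obtain xs ys where "mup A B = length xs + length ys" "unique_partition A B xs ys" by blast
  then show ?thesis by (intro that) simp_all
qed

lemma exa1_KAB_add:
  assumes "0 < A" "0 < B" and n: "n = A + B"
  shows "exa1_KAB n A B + n = (n choose 2) + mup A B"
proof -
  obtain xs ys where "unique_partition A B xs ys" "length xs + length ys = mup A B"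
    using mup_attained[OF assms(1,2)] .
  then obtain E0 where E0: "simple_graph n E0" "N_KAB n E0 A B = 1"
    and card_E0: "card E0 + n = (n choose 2) + mup A B"
    using graph_of_unique_partition[OF assms(1) n] by metis
  have bound: "card E + n \<le> (n choose 2) + mup A B" if "simple_graph n E" "N_KAB n E A B = 1" for E
    using unique_partition_of_graph[OF assms(1) n that] unique_partition_length_le_mup[OF assms(1,2)]
    by fastforce
  have "exa1_KAB n A B = card E0"
    unfolding exa1_KAB_def
  proof (rule Max_eqI)
    show "finite {card E |E. simple_graph n E \<and> N_KAB n E A B = 1}"
      by (rule finite_subset[of _ "{..(n choose 2) + mup A B}"]) (auto dest: bound)
    show "y \<le> card E0" if "y \<in> {card E |E. simple_graph n E \<and> N_KAB n E A B = 1}" for y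
      using that bound card_E0 by fastforce
    show "card E0 \<in> {card E |E. simple_graph n E \<and> N_KAB n E A B = 1}" using E0 by blast
  qed
  then show ?thesis using card_E0 by simp
qed

theorem proposition3p1:
  fixes A B n :: nat
  assumes "A > 0" and "B > 0" and "n = A + B"
  shows "int (exa1_KAB n A B) = int (n choose 2) - int A - int B + int (mup A B)"
  using exa1_KAB_add[OF assms] assms(3) by linarith

end
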